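(* For any $x\in S\cap\mathbb{R}^n$, either there exists $x'\in S\cap\mathbb{R}^n$ such that $f(x')\le f(x)$ and the tangent digraph $\mathcal{G}(x')$ is connected, or $f$ is not bounded below on $S$.
   Context: $\mathbb{R}_{\max}=\mathbb{R}\cup\{-\infty\}$. Data: $A^\pm=(a^\pm_{i,j})\in\mathbb{R}_{\max}^{m\times n}$, $C=(c_{k,j})\in\mathbb{R}_{\max}^{p\times n}$, $\mu^+\in\mathbb{Z}_{\ge0}^p$, $\mu^-\in\mathbb{Z}_{\ge0}^n$; $A=(a_{i,j})$, $a_{i,j}=\max(a^+_{i,j},a^-_{i,j})$. $f(x)=\sum_k\mu^+_k\max_j(c_{k,j}+x_j)-\sum_j\mu^-_jx_j$; $S=\{x:\max_j(a^+_{i,j}+x_j)\ge\max_j(a^-_{i,j}+x_j)\ \forall i\in[m]\}$. Standing assumptions: each row of $A$ and $C$ has a finite entry; $\sum_k\mu^+_k=\sum_j\mu^-_j$; the undirected graph on $\{u_1..u_p\}\cup[n]\cup\{w_1..w_m\}$ with edges $\{u_k,j\}$ ($c_{k,j}\ne-\infty$) and $\{w_i,j\}$ ($a_{i,j}\ne-\infty$) is connected. The tangent digraph $\mathcal{G}(x)$ has vertices $U=\{u_1..u_p\}$, $V=[n]$, $W=\{w_1..w_m\}$ and edges $E_1(x)=\{(u_k,j):\max_{j'}(c_{k,j'}+x_{j'})=c_{k,j}+x_j\}$, $E_2(x)=\{(w_i,j):\max_{j'}(a_{i,j'}+x_{j'})=a^-_{i,j}+x_j\}$, $E_3(x)=\{(j,w_i):\max_{j'}(a_{i,j'}+x_{j'})=a^+_{i,j}+x_j\}$;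 connectedness refers to its underlying undirected graph. *)

theory Defs
  imports Complex_Main "HOL-Library.Extended_Real"
begin

text \<open>Tropical (max-plus) semiring R_max is modelled by ereal with entries different
from +infinity; -infinity is the tropical zero. Indices are 0-based:
rows i < m of A, rows k < p of C, columns j < n. A vector of R^n is a
function nat => real of which only the components j < n matter.\<close>

definition rowmax :: "nat \<Rightarrow> (nat \<Rightarrow> ereal) \<Rightarrow> (nat \<Rightarrow> real) \<Rightarrow> ereal" where
  "rowmax n r x = (SUP j\<in>{..<n}. r j + ereal (x j))"

definition Amax :: "(nat \<Rightarrow> nat \<Rightarrow> ereal) \<Rightarrow> (nat \<Rightarrow> nat \<Rightarrow> ereal) \<Rightarrow> nat \<Rightarrow> nat \<Rightarrow> ereal" where
  "Amax Ap Am i j = max (Ap i j) (Am i j)"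

definition in_S :: "nat \<Rightarrow> nat \<Rightarrow> (nat \<Rightarrow> nat \<Rightarrow> ereal) \<Rightarrow> (nat \<Rightarrow> nat \<Rightarrow> ereal)
    \<Rightarrow> (nat \<Rightarrow> real) \<Rightarrow> bool" where
  "in_S m n Ap Am x = (\<forall>i<m. rowmax n (Ap i) x \<ge> rowmax n (Am i) x)"

definition fobj :: "nat \<Rightarrow> nat \<Rightarrow> (nat \<Rightarrow> nat \<Rightarrow> ereal) \<Rightarrow> (nat \<Rightarrow> nat) \<Rightarrow> (nat \<Rightarrow> nat)
    \<Rightarrow> (nat \<Rightarrow> real) \<Rightarrow> ereal" where
  "fobj n p C mup mum x =
     (\<Sum>k<p. ereal (real (mup k)) * rowmax n (C k) x) - ereal (\<Sum>j<n. real (mum j) * x j)"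

datatype vertex = U nat | V nat | W nat

definition vset :: "nat \<Rightarrow> nat \<Rightarrow> nat \<Rightarrow> vertex set" where
  "vset m n p = {U k | k. k < p} \<union> {V j | j. j < n} \<union> {W i | i. i < m}"

definition ug_connected :: "vertex set \<Rightarrow> (vertex \<times> vertex) set \<Rightarrow> bool" where
  "ug_connected Vs E = (\<forall>a\<in>Vs. \<forall>b\<in>Vs. (a, b) \<in> (E \<union> E\<inverse>)\<^sup>*)"

definition sparsity_edges :: "nat \<Rightarrow> nat \<Rightarrow> nat \<Rightarrow> (nat \<Rightarrow> nat \<Rightarrow> ereal) \<Rightarrow> (nat \<Rightarrow> nat \<Rightarrow> ereal)
    \<Rightarrow> (nat \<Rightarrow> nat \<Rightarrow> ereal) \<Rightarrow> (vertex \<times> vertex) set" where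
  "sparsity_edges m n p Ap Am C =
     {(U k, V j) | k j. k < p \<and> j < n \<and> C k j \<noteq> -\<infinity>} \<union>
     {(W i, V j) | i j. i < m \<and> j < n \<and> Amax Ap Am i j \<noteq> -\<infinity>}"

definition tangent_edges :: "nat \<Rightarrow> nat \<Rightarrow> nat \<Rightarrow> (nat \<Rightarrow> nat \<Rightarrow> ereal) \<Rightarrow> (nat \<Rightarrow> nat \<Rightarrow> ereal)
    \<Rightarrow> (nat \<Rightarrow> nat \<Rightarrow> ereal) \<Rightarrow> (nat \<Rightarrow> real) \<Rightarrow> (vertex \<times> vertex) set" where
  "tangent_edges m n p Ap Am C x =
     {(U k, V j) | k j. k < p \<and> j < n \<and> rowmax n (C k) x = C k j + ereal (x j)} \<union>
     {(W i, V j) | i j. i < m \<and> j < n \<and> rowmax n (Amax Ap Am i) x = Am i j + ereal (x j)} \<union>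
     {(V j, W i) | i j. i < m \<and> j < n \<and> rowmax n (Amax Ap Am i) x = Ap i j + ereal (x j)}"

end

theory Submission
  imports Defs
begin

text \<open>
  Among the feasible points \<open>y\<close> with \<open>f y \<le> f x\<close>, take one whose tangent digraph has the
  most edges. Suppose its tangent digraph is disconnected and let \<open>K\<close> be a connected component.
  Raising the coordinates \<open>y j\<close> with \<open>j \<in> K\<close> by a common \<open>t \<ge> 0\<close> raises the maximum of
  every row in \<open>K\<close> by \<open>t\<close> and, as long as no entry of a row outside \<open>K\<close> overtakes
  that row's maximum, leaves the other rows unchanged. Hence all tangent edges survive,
  feasibility is kept, and \<open>f\<close> changes by \<open>t\<close> times the slope
  \<open>\<Sum>{\<mu>\<^sup>+ k | u k \<in> K} - \<Sum>{\<mu>\<^sup>- j | j \<in> K}\<close>. Because \<open>\<Sum>\<mu>\<^sup>+ = \<Sum>\<mu>\<^sup>-\<close>, the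
  complement of \<open>K\<close> has the opposite slope, so one of the two sides has slope \<open>\<le> 0\<close>;
  connectedness of the sparsity graph gives a finite entry between the two sides. If such an
  entry lies in a row outside the chosen side and a column inside it, raising \<open>t\<close> until the
  first such entry becomes tight creates a new tangent edge without increasing \<open>f\<close>,
  contradicting maximality. Otherwise the slope is negative and every \<open>t\<close> is allowed, so \<open>f\<close>
  is unbounded below.
\<close>

lemma rowmax_upper: "j < n \<Longrightarrow> r j + ereal (x j) \<le> rowmax n r x"
  unfolding rowmax_def by (rule SUP_upper) auto

lemma rowmax_least: "(\<And>j. j < n \<Longrightarrow> r j + ereal (x j) \<le> M) \<Longrightarrow> rowmax n r x \<le> M"
  unfolding rowmax_def by (rule SUP_least) auto

lemma rowmax_attained:
  assumes "0 < n"
  obtains j where "j < n" "rowmax n r x = r j + ereal (x j)"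
proof -
  let ?vals = "(\<lambda>j. r j + ereal (x j)) ` {..<n}"
  have "rowmax n r x = Max ?vals"
    unfolding rowmax_def using assms by (subst Max_Sup) auto
  moreover have "Max ?vals \<in> ?vals"
    using assms by (intro Max_in) auto
  ultimately show thesis using that by auto
qed

lemma rowmax_finite:
  assumes "\<forall>j<n. r j \<noteq> \<infinity>" and "j0 < n" and "r j0 \<noteq> -\<infinity>"
  shows "\<bar>rowmax n r x\<bar> \<noteq> \<infinity>"
proof -
  obtain j where "j < n" "rowmax n r x = r j + ereal (x j)"
    using rowmax_attained assms(2) by (metis gr_zeroI not_less0)
  then have "rowmax n r x \<noteq> \<infinity>" using assms(1) by auto
  moreover have "rowmax n r x \<noteq> -\<infinity>"
    using rowmax_upper[OF assms(2), of r x] assms(3) by auto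
  ultimately show ?thesis by auto
qed

lemma rowmax_shift_argmax_inside:
  assumes "0 < n" "0 \<le> t"
    and "\<forall>j<n. rowmax n r x = r j + ereal (x j) \<longrightarrow> j \<in> J"
  shows "rowmax n r (\<lambda>j. if j \<in> J then x j + t else x j) = rowmax n r x + ereal t"
    (is "rowmax n r ?x' = _")
proof (rule antisym)
  show "rowmax n r ?x' \<le> rowmax n r x + ereal t"
  proof (rule rowmax_least)
    fix j assume "j < n"
    then have "r j + ereal (x j) \<le> rowmax n r x" by (rule rowmax_upper)
    then show "r j + ereal (?x' j) \<le> rowmax n r x + ereal t"
      using \<open>0 \<le> t\<close> by (cases "r j"; cases "rowmax n r x") auto
  qed
next
  obtain j where j: "j < n" "rowmax n r x = r j + ereal (x j)"
    using rowmax_attained[OF assms(1)] .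
  then have "rowmax n r x + ereal t = r j + ereal (?x' j)"
    using assms(3) by (simp add: add.assoc)
  also have "\<dots> \<le> rowmax n r ?x'" using j(1) by (rule rowmax_upper)
  finally show "rowmax n r x + ereal t \<le> rowmax n r ?x'" .
qed

lemma rowmax_shift_argmax_outside:
  assumes "0 < n"
    and "\<forall>j<n. rowmax n r x = r j + ereal (x j) \<longrightarrow> j \<notin> J"
    and "\<forall>j<n. j \<in> J \<longrightarrow> r j + ereal (x j + t) \<le> rowmax n r x"
  shows "rowmax n r (\<lambda>j. if j \<in> J then x j + t else x j) = rowmax n r x"
    (is "rowmax n r ?x' = _")
proof (rule antisym)
  show "rowmax n r ?x' \<le> rowmax n r x"
    using assms(3) rowmax_upper by (intro rowmax_least) auto
next
  obtain j where j: "j < n" "rowmax n r x = r j + ereal (x j)"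
    using rowmax_attained[OF assms(1)] .
  then show "rowmax n r x \<le> rowmax n r ?x'"
    using assms(2) rowmax_upper[OF j(1), of r ?x'] by simp
qed

lemma ereal_max_add_distrib: "max a b + c = max (a + c) (b + c :: ereal)"
  by (metis add_right_mono max.absorb_iff2 max.orderE nle_le)

lemma rowmax_max:
  "rowmax n (\<lambda>j. max (a j) (b j)) x = max (rowmax n a x) (rowmax n b x)"
  unfolding rowmax_def ereal_max_add_distrib
  using Complete_Lattices.SUP_sup_distrib[of "\<lambda>j. a j + ereal (x j)" "{..<n}"]
  by (simp add: sup_max)

definition edge_closed :: "('a \<times> 'a) set \<Rightarrow> 'a set \<Rightarrow> bool" where
  "edge_closed E K \<longleftrightarrow> (\<forall>(u, v) \<in> E. u \<in> K \<longleftrightarrow> v \<in> K)"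

lemma edge_closed_Compl [simp]: "edge_closed E (- K) \<longleftrightarrow> edge_closed E K"
  unfolding edge_closed_def by auto

lemma edge_closed_component: "edge_closed E {v. (a, v) \<in> (E \<union> E\<inverse>)\<^sup>*}"
  unfolding edge_closed_def by (auto intro: rtrancl_into_rtrancl)

lemma rtrancl_symcl_crossing_edge:
  assumes "(a, b) \<in> (E \<union> E\<inverse>)\<^sup>*" "a \<in> K" "b \<notin> K"
  obtains u v where "(u, v) \<in> E" "u \<in> K \<longleftrightarrow> v \<notin> K"
  using assms by induction auto

lemma exists_by_bounded_ascent:
  fixes g :: "'a \<Rightarrow> nat"
  assumes "P x"
    and bounded: "\<And>y. P y \<Longrightarrow> g y \<le> B"
    and ascent: "\<And>y. P y \<Longrightarrow> \<not> Q y \<Longrightarrow> \<exists>z. P z \<and> g y < g z"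
  shows "\<exists>y. P y \<and> Q y"
  using assms(1)
proof (induction "B - g x" arbitrary: x rule: less_induct)
  case less
  show ?case
  proof (cases "Q x")
    case False
    then obtain z where "P z" "g x < g z" using ascent less.prems by blast
    moreover from \<open>P z\<close> have "B - g z < B - g x" using \<open>g x < g z\<close> bounded by fastforce
    ultimately show ?thesis using less.hyps by blast
  qed (use less.prems in blast)
qed

lemma finite_vset: "finite (vset m n p)"
  by (simp add: vset_def)

lemma tangent_edges_subset_vset: "tangent_edges m n p Ap Am C x \<subseteq> vset m n p \<times> vset m n p"
  by (auto simp: tangent_edges_def vset_def)

definition shift :: "vertex set \<Rightarrow> real \<Rightarrow> (nat \<Rightarrow> real) \<Rightarrow> nat \<Rightarrow> real" where
  "shift K t y = (\<lambda>j. if V j \<in> K then y j + t else y j)"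

locale tropical_program =
  fixes m n p :: nat
    and Ap Am :: "nat \<Rightarrow> nat \<Rightarrow> ereal"
    and C :: "nat \<Rightarrow> nat \<Rightarrow> ereal"
    and mup mum :: "nat \<Rightarrow> nat"
  assumes A_entries: "\<forall>i<m. \<forall>j<n. Ap i j \<noteq> \<infinity> \<and> Am i j \<noteq> \<infinity>"
    and C_entries: "\<forall>k<p. \<forall>j<n. C k j \<noteq> \<infinity>"
    and A_rows: "\<forall>i<m. \<exists>j<n. Amax Ap Am i j \<noteq> -\<infinity>"
    and C_rows: "\<forall>k<p. \<exists>j<n. C k j \<noteq> -\<infinity>"
    and mu_sum: "(\<Sum>k<p. mup k) = (\<Sum>j<n. mum j)"
    and conn: "ug_connected (vset m n p) (sparsity_edges m n p Ap Am C)"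
begin

abbreviation "A \<equiv> Amax Ap Am"
abbreviation "feasible \<equiv> in_S m n Ap Am"
abbreviation "f \<equiv> fobj n p C mup mum"
abbreviation "tangent \<equiv> tangent_edges m n p Ap Am C"

text \<open>The vertices \<open>U k\<close> and \<open>W i\<close> index the rows of \<open>C\<close> and of \<open>A\<close>; \<open>row (V j)\<close> is a dummy.\<close>

definition rows :: "vertex set" where
  "rows = U ` {..<p} \<union> W ` {..<m}"

fun row :: "vertex \<Rightarrow> nat \<Rightarrow> ereal" where
  "row (U k) = C k"
| "row (V j) = (\<lambda>_. -\<infinity>)"
| "row (W i) = A i"

definition slope :: "vertex set \<Rightarrow> real" where
  "slope K = (\<Sum>k<p. if U k \<in> K then real (mup k) else 0) - (\<Sum>j<n. if V j \<in> K then real (mum j) else 0)"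

definition shift_admissible :: "vertex set \<Rightarrow> (nat \<Rightarrow> real) \<Rightarrow> real \<Rightarrow> bool" where
  "shift_admissible K y t \<longleftrightarrow> 0 \<le> t \<and>
     (\<forall>r \<in> rows - K. \<forall>j<n. V j \<in> K \<longrightarrow> row r j + ereal (y j + t) \<le> rowmax n (row r) y)"

lemma Ap_le_A: "Ap i j \<le> A i j" and Am_le_A: "Am i j \<le> A i j"
  by (simp_all add: Amax_def)

lemma finite_rows: "finite rows"
  by (simp add: rows_def)

lemma row_entry_not_infty: "r \<in> rows \<Longrightarrow> j < n \<Longrightarrow> row r j \<noteq> \<infinity>"
  using A_entries C_entries by (auto simp: rows_def Amax_def max_def split: if_split_asm)

lemma row_has_finite_entry: "r \<in> rows \<Longrightarrow> \<exists>j<n. row r j \<noteq> -\<infinity>"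
  using A_rows C_rows by (auto simp: rows_def)

lemma rowmax_row_finite: "r \<in> rows \<Longrightarrow> \<bar>rowmax n (row r) y\<bar> \<noteq> \<infinity>"
  using row_has_finite_entry row_entry_not_infty rowmax_finite by meson

lemma tight_row_iff_tangent_edge:
  assumes "r \<in> rows" "j < n"
  shows "rowmax n (row r) y = row r j + ereal (y j) \<longleftrightarrow> (r, V j) \<in> tangent y \<or> (V j, r) \<in> tangent y"
proof -
  have A_row: "rowmax n (A i) y = A i j + ereal (y j) \<longleftrightarrow> (W i, V j) \<in> tangent y \<or> (V j, W i) \<in> tangent y"
    if "i < m" for i
  proof -
    have "A i j + ereal (y j) = max (Ap i j + ereal (y j)) (Am i j + ereal (y j))"
      by (simp add: Amax_def ereal_max_add_distrib)
    then show ?thesis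
      using rowmax_upper[OF assms(2), of "A i" y] that assms(2)
      by (auto simp: max_def tangent_edges_def)
  qed
  show ?thesis
    using assms A_row by (cases r) (auto simp: rows_def tangent_edges_def)
qed

lemma tight_row_same_side:
  assumes "edge_closed (tangent y) K" "r \<in> rows" "j < n"
    and "rowmax n (row r) y = row r j + ereal (y j)"
  shows "r \<in> K \<longleftrightarrow> V j \<in> K"
  using assms tight_row_iff_tangent_edge unfolding edge_closed_def by blast

lemma feasible_iff_tangent: "feasible y \<longleftrightarrow> (\<forall>i<m. \<exists>j<n. (V j, W i) \<in> tangent y)"
proof -
  have "rowmax n (Am i) y \<le> rowmax n (Ap i) y \<longleftrightarrow> (\<exists>j<n. rowmax n (A i) y = Ap i j + ereal (y j))"
    if "i < m" for i
  proof -
    have A_rowmax: "rowmax n (A i) y = max (rowmax n (Ap i) y) (rowmax n (Am i) y)"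
      unfolding Amax_def by (rule rowmax_max)
    have "0 < n" using A_rows \<open>i < m\<close> by auto
    show ?thesis
    proof
      assume "rowmax n (Am i) y \<le> rowmax n (Ap i) y"
      moreover obtain j where "j < n" "rowmax n (Ap i) y = Ap i j + ereal (y j)"
        using rowmax_attained[OF \<open>0 < n\<close>] .
      ultimately show "\<exists>j<n. rowmax n (A i) y = Ap i j + ereal (y j)"
        using A_rowmax by (auto simp: max_def)
    next
      assume "\<exists>j<n. rowmax n (A i) y = Ap i j + ereal (y j)"
      then show "rowmax n (Am i) y \<le> rowmax n (Ap i) y"
        using A_rowmax rowmax_upper[of _ n "Ap i" y] by (metis max.bounded_iff)
    qed
  qed
  then show ?thesis
    unfolding in_S_def by (auto simp: tangent_edges_def)
qed

lemma rowmax_row_shift: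
  assumes closed: "edge_closed (tangent y) K" and adm: "shift_admissible K y t" and "r \<in> rows"
  shows "rowmax n (row r) (shift K t y) = rowmax n (row r) y + ereal (if r \<in> K then t else 0)"
proof -
  have "0 < n" using row_has_finite_entry[OF \<open>r \<in> rows\<close>] by auto
  have side: "\<forall>j<n. rowmax n (row r) y = row r j + ereal (y j) \<longrightarrow> (V j \<in> K \<longleftrightarrow> r \<in> K)"
    using tight_row_same_side[OF closed \<open>r \<in> rows\<close>] by blast
  have "0 \<le> t" using adm by (simp add: shift_admissible_def)
  show ?thesis
  proof (cases "r \<in> K")
    case True
    then show ?thesis
      using rowmax_shift_argmax_inside[OF \<open>0 < n\<close> \<open>0 \<le> t\<close>, where r = "row r" and x = y
          and J = "{j. V j \<in> K}"] side
      by (simp add: shift_def)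
  next
    case False
    then show ?thesis
      using rowmax_shift_argmax_outside[OF \<open>0 < n\<close>, where r = "row r" and x = y
          and J = "{j. V j \<in> K}" and t = t] adm side \<open>r \<in> rows\<close>
      by (simp add: shift_def shift_admissible_def)
  qed
qed

lemma tight_shift:
  assumes closed: "edge_closed (tangent y) K" and adm: "shift_admissible K y t"
    and "r \<in> rows" "j < n" "e j \<le> row r j"
    and tight: "rowmax n (row r) y = e j + ereal (y j)"
  shows "rowmax n (row r) (shift K t y) = e j + ereal (shift K t y j)"
proof -
  have "rowmax n (row r) y \<le> row r j + ereal (y j)"
    using tight \<open>e j \<le> row r j\<close> by (simp add: add_right_mono)
  then have "rowmax n (row r) y = row r j + ereal (y j)"
    using rowmax_upper[OF \<open>j < n\<close>] by (simp add: antisym)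
  then have "r \<in> K \<longleftrightarrow> V j \<in> K"
    using tight_row_same_side[OF closed \<open>r \<in> rows\<close> \<open>j < n\<close>] by blast
  then have "rowmax n (row r) (shift K t y) = rowmax n (row r) y + ereal (shift K t y j - y j)"
    using rowmax_row_shift[OF closed adm \<open>r \<in> rows\<close>] by (simp add: shift_def)
  then show ?thesis
    using tight by (cases "e j") simp_all
qed

lemma tangent_shift_mono:
  assumes "edge_closed (tangent y) K" "shift_admissible K y t"
  shows "tangent y \<subseteq> tangent (shift K t y)"
proof
  fix e assume "e \<in> tangent y"
  then consider
      (UV) k j where "e = (U k, V j)" "k < p" "j < n" "rowmax n (C k) y = C k j + ereal (y j)"
    | (WV) i j where "e = (W i, V j)" "i < m" "j < n" "rowmax n (A i) y = Am i j + ereal (y j)"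
    | (VW) i j where "e = (V j, W i)" "i < m" "j < n" "rowmax n (A i) y = Ap i j + ereal (y j)"
    unfolding tangent_edges_def by blast
  then show "e \<in> tangent (shift K t y)"
  proof cases
    case UV
    then show ?thesis
      using tight_shift[OF assms, of "U k" j "C k"] by (simp add: rows_def tangent_edges_def)
  next
    case WV
    then show ?thesis
      using tight_shift[OF assms, of "W i" j "Am i"] Am_le_A by (simp add: rows_def tangent_edges_def)
  next
    case VW
    then show ?thesis
      using tight_shift[OF assms, of "W i" j "Ap i"] Ap_le_A by (simp add: rows_def tangent_edges_def)
  qed
qed

lemma feasible_shift:
  assumes "feasible y" "edge_closed (tangent y) K" "shift_admissible K y t"
  shows "feasible (shift K t y)"
  using assms tangent_shift_mono unfolding feasible_iff_tangent by blast

lemma f_conv_real: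
  "f y = ereal ((\<Sum>k<p. real (mup k) * real_of_ereal (rowmax n (C k) y)) - (\<Sum>j<n. real (mum j) * y j))"
proof -
  have "ereal (real (mup k)) * rowmax n (C k) y = ereal (real (mup k) * real_of_ereal (rowmax n (C k) y))"
    if "k \<in> {..<p}" for k
    using rowmax_row_finite[of "U k" y] that by (cases "rowmax n (C k) y") (auto simp: rows_def)
  then have "(\<Sum>k<p. ereal (real (mup k)) * rowmax n (C k) y)
      = (\<Sum>k<p. ereal (real (mup k) * real_of_ereal (rowmax n (C k) y)))"
    by (rule sum.cong[OF refl])
  then show ?thesis
    unfolding fobj_def by simp
qed

lemma slope_Compl: "slope (- K) = - slope K"
proof -
  have complementary: "(if P then a else 0) + (if \<not> P then a else 0) = (a :: real)" for P a
    by simp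
  have "(\<Sum>k<p. if U k \<in> K then real (mup k) else 0) + (\<Sum>k<p. if U k \<notin> K then real (mup k) else 0)
      = (\<Sum>j<n. if V j \<in> K then real (mum j) else 0) + (\<Sum>j<n. if V j \<notin> K then real (mum j) else 0)"
    using mu_sum by (simp add: complementary flip: sum.distrib of_nat_sum)
  then show ?thesis
    unfolding slope_def by simp
qed

lemma f_shift:
  assumes "edge_closed (tangent y) K" "shift_admissible K y t"
  shows "f (shift K t y) = f y + ereal (t * slope K)"
proof -
  have rowmax_C: "real_of_ereal (rowmax n (C k) (shift K t y))
      = real_of_ereal (rowmax n (C k) y) + (if U k \<in> K then t else 0)" if "k < p" for k
    using rowmax_row_shift[OF assms, of "U k"] rowmax_row_finite[of "U k" y] that
    by (cases "rowmax n (C k) y") (auto simp: rows_def)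
  have "(\<Sum>k<p. real (mup k) * real_of_ereal (rowmax n (C k) (shift K t y)))
      = (\<Sum>k<p. real (mup k) * real_of_ereal (rowmax n (C k) y) + t * (if U k \<in> K then real (mup k) else 0))"
    by (rule sum.cong) (simp_all add: rowmax_C algebra_simps)
  moreover have "(\<Sum>j<n. real (mum j) * shift K t y j)
      = (\<Sum>j<n. real (mum j) * y j + t * (if V j \<in> K then real (mum j) else 0))"
    by (rule sum.cong) (simp_all add: shift_def algebra_simps)
  ultimately show ?thesis
    unfolding f_conv_real slope_def by (simp add: sum.distrib sum_distrib_left algebra_simps)
qed

definition crossing_entry :: "vertex set \<Rightarrow> bool" where
  "crossing_entry K \<longleftrightarrow> (\<exists>r \<in> rows - K. \<exists>j<n. V j \<in> K \<and> row r j \<noteq> -\<infinity>)"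

lemma unbounded_without_crossing_entry:
  assumes "feasible y" "edge_closed (tangent y) K" "slope K < 0" "\<not> crossing_entry K"
  shows "\<exists>z. feasible z \<and> f z < ereal L"
proof -
  obtain v where v: "f y = ereal v"
    using f_conv_real by blast
  define t where "t = (\<bar>v - L\<bar> + 1) / - slope K"
  have t_slope: "t * slope K = - (\<bar>v - L\<bar> + 1)"
    using \<open>slope K < 0\<close> by (simp add: t_def)
  have "shift_admissible K y t"
    using assms(3,4) by (auto simp: shift_admissible_def crossing_entry_def t_def divide_le_0_iff)
  then have "feasible (shift K t y)" "f (shift K t y) = ereal (v - (\<bar>v - L\<bar> + 1))"
    using feasible_shift f_shift assms(1,2) v t_slope by auto
  then show ?thesis
    by (intro exI[of _ "shift K t y"]) auto
qed

text \<open>How far \<open>y j\<close> can be raised before entry \<open>j\<close> of row \<open>r\<close> attains the row maximum.\<close>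

definition slack :: "(nat \<Rightarrow> real) \<Rightarrow> vertex \<Rightarrow> nat \<Rightarrow> real" where
  "slack y r j = real_of_ereal (rowmax n (row r) y) - real_of_ereal (row r j) - y j"

lemma slack_le_iff:
  assumes "r \<in> rows" "j < n" "row r j \<noteq> -\<infinity>"
  shows "row r j + ereal (y j + s) \<le> rowmax n (row r) y \<longleftrightarrow> s \<le> slack y r j"
    and "row r j + ereal (y j + s) = rowmax n (row r) y \<longleftrightarrow> s = slack y r j"
  using assms row_entry_not_infty[OF assms(1,2)] rowmax_row_finite[OF assms(1), of y]
  by (cases "row r j"; cases "rowmax n (row r) y"; auto simp: slack_def)+

lemma slack_pos:
  assumes "r \<in> rows" "j < n" "row r j \<noteq> -\<infinity>" "rowmax n (row r) y \<noteq> row r j + ereal (y j)"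
  shows "0 < slack y r j"
  using slack_le_iff[OF assms(1-3), of y 0] rowmax_upper[OF assms(2), of "row r" y] assms(4)
  by (auto simp: less_le)

lemma min_slack_shift:
  assumes closed: "edge_closed (tangent y) K" and "crossing_entry K"
  obtains t r j where "shift_admissible K y t" "r \<in> rows - K" "j < n" "V j \<in> K"
    "rowmax n (row r) (shift K t y) = row r j + ereal (shift K t y j)"
proof -
  define P where "P = {(r, j). r \<in> rows - K \<and> j < n \<and> V j \<in> K \<and> row r j \<noteq> -\<infinity>}"
  have "finite P"
    by (rule finite_subset[of _ "rows \<times> {..<n}"]) (auto simp: P_def finite_rows)
  moreover have "P \<noteq> {}"
    using \<open>crossing_entry K\<close> by (auto simp: P_def crossing_entry_def)
  ultimately obtain r0 j0 where rj0: "(r0, j0) \<in> P"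
    and min: "\<And>r j. (r, j) \<in> P \<Longrightarrow> slack y r0 j0 \<le> slack y r j"
    using ex_is_arg_min_if_finite[of P "\<lambda>(r, j). slack y r j"]
    unfolding is_arg_min_linorder by fast
  then have "r0 \<in> rows - K" "j0 < n" "V j0 \<in> K" "row r0 j0 \<noteq> -\<infinity>"
    by (auto simp: P_def)
  define t where "t = slack y r0 j0"
  have "0 < t"
    unfolding t_def using \<open>r0 \<in> rows - K\<close> \<open>j0 < n\<close> \<open>V j0 \<in> K\<close> \<open>row r0 j0 \<noteq> -\<infinity>\<close>
    by (intro slack_pos) (use tight_row_same_side[OF closed] in auto)
  have adm: "shift_admissible K y t"
    unfolding shift_admissible_def
  proof (intro conjI ballI allI impI)
    show "0 \<le> t" using \<open>0 < t\<close> by simp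
    fix r j assume "r \<in> rows - K" "j < n" "V j \<in> K"
    show "row r j + ereal (y j + t) \<le> rowmax n (row r) y"
    proof (cases "row r j = -\<infinity>")
      case False
      then have "(r, j) \<in> P" using \<open>r \<in> rows - K\<close> \<open>j < n\<close> \<open>V j \<in> K\<close> by (simp add: P_def)
      then show ?thesis
        using slack_le_iff(1) min \<open>r \<in> rows - K\<close> \<open>j < n\<close> False by (simp add: t_def)
    qed simp
  qed
  have "rowmax n (row r0) (shift K t y) = rowmax n (row r0) y"
    using rowmax_row_shift[OF closed adm] \<open>r0 \<in> rows - K\<close> by simp
  also have "\<dots> = row r0 j0 + ereal (y j0 + t)"
    using slack_le_iff(2)[of r0 j0 y t] \<open>r0 \<in> rows - K\<close> \<open>j0 < n\<close> \<open>row r0 j0 \<noteq> -\<infinity>\<close>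
    by (simp add: t_def)
  also have "\<dots> = row r0 j0 + ereal (shift K t y j0)"
    using \<open>V j0 \<in> K\<close> by (simp add: shift_def)
  finally show thesis
    using that adm \<open>r0 \<in> rows - K\<close> \<open>j0 < n\<close> \<open>V j0 \<in> K\<close> by blast
qed

lemma shift_creates_tangent_edge:
  assumes "feasible y" "edge_closed (tangent y) K" "slope K \<le> 0" "crossing_entry K"
  shows "\<exists>z. feasible z \<and> f z \<le> f y \<and> tangent y \<subset> tangent z"
proof -
  obtain t r j where adm: "shift_admissible K y t" and "r \<in> rows - K" "j < n" "V j \<in> K"
    and tight: "rowmax n (row r) (shift K t y) = row r j + ereal (shift K t y j)"
    using min_slack_shift[OF assms(2,4)] .
  have "(r, V j) \<in> tangent (shift K t y) \<or> (V j, r) \<in> tangent (shift K t y)"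
    using tight_row_iff_tangent_edge tight \<open>r \<in> rows - K\<close> \<open>j < n\<close> by blast
  moreover have "(r, V j) \<notin> tangent y" "(V j, r) \<notin> tangent y"
    using assms(2) \<open>r \<in> rows - K\<close> \<open>V j \<in> K\<close> unfolding edge_closed_def by auto
  moreover have "f (shift K t y) \<le> f y"
  proof -
    have "t * slope K \<le> 0"
      using adm assms(3) by (simp add: shift_admissible_def mult_nonneg_nonpos)
    then show ?thesis
      using f_shift[OF assms(2) adm] f_conv_real[of y] by simp
  qed
  ultimately show ?thesis
    using tangent_shift_mono[OF assms(2) adm] feasible_shift[OF assms(1,2) adm] by blast
qed

lemma sparsity_edge_row:
  assumes "(u, v) \<in> sparsity_edges m n p Ap Am C"
  obtains r j where "r \<in> rows" "j < n" "row r j \<noteq> -\<infinity>" "u = r" "v = V j"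
proof -
  consider (C) k j where "u = U k" "v = V j" "k < p" "j < n" "C k j \<noteq> -\<infinity>"
    | (A) i j where "u = W i" "v = V j" "i < m" "j < n" "A i j \<noteq> -\<infinity>"
    using assms unfolding sparsity_edges_def by blast
  then show thesis
  proof cases
    case C
    then show thesis using that[of "U k" j] by (simp add: rows_def)
  next
    case A
    then show thesis using that[of "W i" j] by (simp add: rows_def)
  qed
qed

lemma separated_crossing_entry:
  assumes "a \<in> vset m n p" "b \<in> vset m n p" "a \<in> K" "b \<notin> K"
  shows "crossing_entry K \<or> crossing_entry (- K)"
proof -
  have "(a, b) \<in> (sparsity_edges m n p Ap Am C \<union> (sparsity_edges m n p Ap Am C)\<inverse>)\<^sup>*"
    using conn assms(1,2) unfolding ug_connected_def by blast
  then obtain u v where "(u, v) \<in> sparsity_edges m n p Ap Am C" "u \<in> K \<longleftrightarrow> v \<notin> K"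
    using rtrancl_symcl_crossing_edge assms(3,4) by metis
  then show ?thesis
    unfolding crossing_entry_def by (elim sparsity_edge_row) (cases "u \<in> K"; auto)
qed

lemma tangent_enlargement_if_disconnected:
  assumes "feasible y" "\<not> ug_connected (vset m n p) (tangent y)"
    and bounded: "\<forall>z. feasible z \<longrightarrow> ereal L \<le> f z"
  shows "\<exists>z. feasible z \<and> f z \<le> f y \<and> tangent y \<subset> tangent z"
proof -
  obtain a b where "a \<in> vset m n p" "b \<in> vset m n p" "(a, b) \<notin> (tangent y \<union> (tangent y)\<inverse>)\<^sup>*"
    using assms(2) unfolding ug_connected_def by blast
  define K where "K = {v. (a, v) \<in> (tangent y \<union> (tangent y)\<inverse>)\<^sup>*}"
  have "edge_closed (tangent y) K" "edge_closed (tangent y) (- K)"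
    unfolding K_def using edge_closed_component by auto
  moreover have "crossing_entry K \<or> crossing_entry (- K)"
    using separated_crossing_entry \<open>a \<in> vset m n p\<close> \<open>b \<in> vset m n p\<close> \<open>(a, b) \<notin> _\<close>
    by (simp add: K_def)
  moreover have "slope K \<le> 0 \<and> (slope K < 0 \<or> crossing_entry K)
      \<or> slope (- K) \<le> 0 \<and> (slope (- K) < 0 \<or> crossing_entry (- K))"
    using slope_Compl[of K] \<open>crossing_entry K \<or> crossing_entry (- K)\<close>
    by (cases "crossing_entry K") auto
  ultimately obtain K' where K': "edge_closed (tangent y) K'" "slope K' \<le> 0"
    "slope K' < 0 \<or> crossing_entry K'"
    by blast
  show ?thesis
  proof (cases "crossing_entry K'")
    case True
    then show ?thesis using shift_creates_tangent_edge assms(1) K' by blast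
  next
    case False
    then obtain z where "feasible z" "f z < ereal L"
      using unbounded_without_crossing_entry assms(1) K' by blast
    then show ?thesis using bounded by (auto simp: not_le[symmetric])
  qed
qed

end

theorem proposition4p2:
  fixes m n p :: nat
    and Ap Am :: "nat \<Rightarrow> nat \<Rightarrow> ereal"
    and C :: "nat \<Rightarrow> nat \<Rightarrow> ereal"
    and mup mum :: "nat \<Rightarrow> nat"
    and x :: "nat \<Rightarrow> real"
  assumes A_entries: "\<forall>i<m. \<forall>j<n. Ap i j \<noteq> \<infinity> \<and> Am i j \<noteq> \<infinity>"
    and C_entries: "\<forall>k<p. \<forall>j<n. C k j \<noteq> \<infinity>"
    and A_rows: "\<forall>i<m. \<exists>j<n. Amax Ap Am i j \<noteq> -\<infinity>"
    and C_rows: "\<forall>k<p. \<exists>j<n. C k j \<noteq> -\<infinity>"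
    and mu_sum: "(\<Sum>k<p. mup k) = (\<Sum>j<n. mum j)"
    and conn: "ug_connected (vset m n p) (sparsity_edges m n p Ap Am C)"
    and xS: "in_S m n Ap Am x"
  shows "(\<exists>x'. in_S m n Ap Am x' \<and> fobj n p C mup mum x' \<le> fobj n p C mup mum x
              \<and> ug_connected (vset m n p) (tangent_edges m n p Ap Am C x'))
         \<or> \<not> (\<exists>L::real. \<forall>y. in_S m n Ap Am y \<longrightarrow> ereal L \<le> fobj n p C mup mum y)"
proof -
  interpret tropical_program m n p Ap Am C mup mum
    using assms by (simp add: tropical_program_def)
  show ?thesis
  proof (cases "\<exists>L::real. \<forall>y. feasible y \<longrightarrow> ereal L \<le> f y")
    case True
    then obtain L where bounded: "\<forall>y. feasible y \<longrightarrow> ereal L \<le> f y" ..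
    let ?E = "vset m n p \<times> vset m n p"
    have "finite ?E" by (simp add: finite_vset)
    have "\<exists>y. (feasible y \<and> f y \<le> f x) \<and> ug_connected (vset m n p) (tangent y)"
    proof (rule exists_by_bounded_ascent[where g = "\<lambda>y. card (tangent y)" and B = "card ?E"])
      show "feasible x \<and> f x \<le> f x" using xS by simp
      show "card (tangent y) \<le> card ?E" for y
        using card_mono[OF \<open>finite ?E\<close> tangent_edges_subset_vset] .
      show "\<exists>z. (feasible z \<and> f z \<le> f x) \<and> card (tangent y) < card (tangent z)"
        if "feasible y \<and> f y \<le> f x" "\<not> ug_connected (vset m n p) (tangent y)" for y
        using tangent_enlargement_if_disconnected[of y L] that bounded
          psubset_card_mono[OF finite_subset[OF tangent_edges_subset_vset \<open>finite ?E\<close>]]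
        by (meson order_trans)
    qed
    then show ?thesis by blast
  qed blast
qed

end
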